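(* Under the standing assumptions (with $K\neq0$) and $\lambda_{\max}(M(0))<1$, let $r^*\in(0,r_A)$ be the unique profit rate with $\lambda_{\max}(M(r^* ))=1$. Then: (i) for all $0\le r_1<r_2\le r^*$, $\Theta^{price}(r_2)\subsetneq\Theta^{price}(r_1)\subseteq\Theta^{val}$; (ii) $\Theta^{price}(r^* )=\{\mathbf w^*\}$, where $\mathbf w^*$ is the left Perron eigenvector of $M(r^* )$ (all components positive) normalized by $w^*_1=1$; in particular no $\mathbf w\in\Theta^{price}(r^* )$ satisfies $\mathbf w^T(I-M(r^* ))>\mathbf 0^T$ strictly.
   Context: Fix $n\ge 2$. $A$ and $K$ are $n\times n$ entrywise nonnegative real matrices, with $K$ not the zero matrix; $\delta_1,\dots,\delta_n\in(0,1]$, $D=K\,\mathrm{diag}(\delta_1,\dots,\delta_n)$, and $\tilde A=A+D$. $L=\mathrm{diag}(l_1,\dots,l_n)$ with all $l_j>0$. $B$ is an $n\times n$ entrywise nonnegative matrix with no zero column. Standing assumption: $\tilde A$ is irreducible and $\lambda_{\max}(\tilde A)<1$, where $\lambda_{\max}(X)$ denotes the spectral radius of a square matrix $X$. $r_A>0$ is defined by $\lambda_{\max}(\tilde A+r_AK)=1$. For $r\in[0,r_A)$, $M(r):=L[I-\tilde A-rK]^{-1}B$, and $M_0:=M(0)=L(I-\tilde A)^{-1}B$. Vector inequalities are componentwise. The value-feasible domain is $\Theta^{val}:=\{\mathbf c\in\mathbb R^n:\ c_j>0\ \forall j,\ c_1=1,\ \mathbf c^T(I-M_0)\ge \mathbf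 0^T\}$, and the price–wage feasible domain is $\Theta^{price}(r):=\{\mathbf w\in\mathbb R^n:\ w_j>0\ \forall j,\ w_1=1,\ \mathbf w^T(I-M(r))\ge\mathbf 0^T\}$. *)

theory Defs
  imports "HOL-Analysis.Analysis"
begin

definition spec_rad :: "real^'n^'n \<Rightarrow> real" where
  "spec_rad X = Max {cmod z | z. det ((mat z :: complex^'n^'n)
                         - (\<chi> i j. complex_of_real (X $ i $ j))) = 0}"

definition nonneg_mat :: "real^'n^'m \<Rightarrow> bool" where
  "nonneg_mat X \<longleftrightarrow> (\<forall>i j. X $ i $ j \<ge> 0)"

text \<open>Irreducibility: there is no nonempty proper index set S that is closed,
  i.e. with X i j = 0 for all i in S and j not in S (equivalently, X is not
  permutation-similar to a block triangular matrix).\<close>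
definition irreducible_mat :: "real^'n^'n \<Rightarrow> bool" where
  "irreducible_mat X \<longleftrightarrow>
     (\<forall>S. S \<noteq> {} \<and> S \<noteq> UNIV \<longrightarrow> (\<exists>i\<in>S. \<exists>j. j \<notin> S \<and> X $ i $ j \<noteq> 0))"

definition diag_mat :: "real^'n \<Rightarrow> real^'n^'n" where
  "diag_mat d = (\<chi> i j. if i = j then d $ i else 0)"

definition tildeA :: "real^'n^'n \<Rightarrow> real^'n^'n \<Rightarrow> real^'n \<Rightarrow> real^'n^'n" where
  "tildeA A K \<delta> = A + K ** diag_mat \<delta>"

definition Mmat :: "real^'n^'n \<Rightarrow> real^'n^'n \<Rightarrow> real^'n \<Rightarrow> real^'n \<Rightarrow> real^'n^'n
                     \<Rightarrow> real \<Rightarrow> real^'n^'n" where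
  "Mmat A K \<delta> l B r =
     diag_mat l ** matrix_inv (mat 1 - tildeA A K \<delta> - r *\<^sub>R K) ** B"

text \<open>Feasible domains; \<open>i1\<close> is the distinguished (first) index used for normalization.\<close>
definition Theta_val :: "'n \<Rightarrow> real^'n^'n \<Rightarrow> real^'n^'n \<Rightarrow> real^'n \<Rightarrow> real^'n
                         \<Rightarrow> real^'n^'n \<Rightarrow> (real^'n) set" where
  "Theta_val i1 A K \<delta> l B =
     {c. (\<forall>j. c $ j > 0) \<and> c $ i1 = 1 \<and>
         (\<forall>j. (c v* (mat 1 - Mmat A K \<delta> l B 0)) $ j \<ge> 0)}"

definition Theta_price :: "'n \<Rightarrow> real^'n^'n \<Rightarrow> real^'n^'n \<Rightarrow> real^'n \<Rightarrow> real^'n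
                         \<Rightarrow> real^'n^'n \<Rightarrow> real \<Rightarrow> (real^'n) set" where
  "Theta_price i1 A K \<delta> l B r =
     {w. (\<forall>j. w $ j > 0) \<and> w $ i1 = 1 \<and>
         (\<forall>j. (w v* (mat 1 - Mmat A K \<delta> l B r)) $ j \<ge> 0)}"

end

theory Submission
  imports Defs "HOL-Computational_Algebra.Polynomial"
begin

text \<open>
  The output matrices M(r) = L (I - A~ - r K)^-1 B are entrywise positive and strictly
  increasing on [0, rA): the Perron root of A~ + r K lies strictly below that of A~ + rA K,
  which is 1, so the resolvent is positive, and the resolvent identity
  R(r2) - R(r1) = (r2 - r1) R(r2) K R(r1) makes it strictly increasing. A normalized positive
  w is feasible at r iff w M(r) <= w, so the feasible sets shrink as r grows. They shrink
  strictly: for the right Perron vector v of M(r*) we have M(r1) v < v, so I - M(r1) has a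
  nonnegative inverse, and the normalized positive solution of w (I - M(r1)) = e_1 is
  feasible at r1 but violates w M(r2) <= w in every other coordinate. At r*, pairing
  w (I - M(r*)) >= 0 with v forces equality, and the left fixed vectors of a positive matrix
  form a line, so only the normalized left Perron vector remains.

  The Perron-Frobenius facts needed are proved directly: Brouwer's fixed point theorem on
  the simplex yields positive eigenvectors, and a positive left eigenvector bounds the
  moduli of all complex eigenvalues.
\<close>

lemma matrix_vector_mult_nth: "(X *v x) $ i = (\<Sum>j\<in>UNIV. X $ i $ j * x $ j)"
  by (simp add: matrix_vector_mult_def)

lemma vector_matrix_mult_nth: "(x v* X) $ j = (\<Sum>i\<in>UNIV. x $ i * X $ i $ j)"
  by (simp add: vector_matrix_mult_def mult.commute)

lemma matrix_matrix_mult_nth: "(X ** Y) $ i $ j = (\<Sum>k\<in>UNIV. X $ i $ k * Y $ k $ j)"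
  by (simp add: matrix_matrix_mult_def)

lemma mat_vector_mult_nth: "(mat k *v x) $ i = k * x $ i"
  by (simp add: matrix_vector_mult_nth mat_def if_distrib if_distribR cong del: if_weak_cong)

lemma diag_mat_mult_nth: "(diag_mat d ** X) $ i $ j = d $ i * X $ i $ j"
  by (simp add: matrix_matrix_mult_nth diag_mat_def if_distrib if_distribR cong del: if_weak_cong)

lemma mult_diag_mat_nth: "(X ** diag_mat d) $ i $ j = X $ i $ j * d $ j"
  by (simp add: matrix_matrix_mult_nth diag_mat_def if_distrib if_distribR cong del: if_weak_cong)

lemma vector_matrix_mult_uminus: "(- x) v* M = - (x v* (M::'a::ring_1^'n^'m))"
  using vector_matrix_mult_diff_distrib[of 0 x M] by simp

lemma vector_matrix_mult_I_minus_nth: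
  "(w v* (mat 1 - M)) $ j = w $ j - (w v* (M::'a::ring_1^'n^'n)) $ j"
  by (simp add: vector_matrix_mult_diff_rdistrib)

lemma matrix_diff_ldistrib:
  fixes A B C :: "'a::ring_1^'n^'n"
  shows "A ** (B - C) = A ** B - A ** C"
  by (vector matrix_matrix_mult_def sum_subtractf right_diff_distrib)

lemma matrix_diff_rdistrib:
  fixes A B C :: "'a::ring_1^'n^'n"
  shows "(B - C) ** A = B ** A - C ** A"
  by (vector matrix_matrix_mult_def sum_subtractf left_diff_distrib)

lemma matrix_inv_left_right:
  assumes "invertible X"
  shows "matrix_inv X ** X = mat 1" and "X ** matrix_inv X = mat 1"
  using someI_ex[OF assms[unfolded invertible_def]] by (simp_all add: matrix_inv_def)

lemma matrix_inv_diff: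
  fixes X Y :: "'a::field^'n^'n"
  assumes "invertible X" "invertible Y"
  shows "matrix_inv Y - matrix_inv X = matrix_inv Y ** (X - Y) ** matrix_inv X"
proof -
  have "matrix_inv Y ** (X - Y) ** matrix_inv X
      = matrix_inv Y ** (X ** matrix_inv X) - (matrix_inv Y ** Y) ** matrix_inv X"
    by (simp add: matrix_diff_ldistrib matrix_diff_rdistrib matrix_mul_assoc)
  then show ?thesis by (simp add: matrix_inv_left_right assms)
qed

lemma det_eq_0_iff_kernel:
  fixes X :: "'a::field^'n^'n"
  shows "det X = 0 \<longleftrightarrow> (\<exists>x. x \<noteq> 0 \<and> X *v x = 0)"
  by (metis invertible_det_nz invertible_left_inverse matrix_left_invertible_ker)

lemma singleton_ne_UNIV:
  assumes "CARD('n) \<ge> 2"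
  shows "{i :: 'n} \<noteq> UNIV"
proof
  assume "{i} = UNIV"
  then have "card {i} = CARD('n)" by (rule arg_cong)
  with assms show False by simp
qed

lemma inner_pos_of_nonneg_nonzero:
  fixes u x :: "real^'n"
  assumes "\<forall>i. 0 < u $ i" "\<forall>i. 0 \<le> x $ i" "x \<noteq> 0"
  shows "0 < inner u x"
proof -
  obtain k where "x $ k \<noteq> 0" using assms(3) by (auto simp: vec_eq_iff)
  then have "0 < x $ k" using assms(2) by (simp add: order_less_le)
  then show ?thesis
    unfolding inner_vec_def using assms(1,2)
    by (intro sum_pos2[where i=k]) (auto intro!: mult_nonneg_nonneg simp: less_imp_le)
qed

lemma pos_vector_nonzero: "\<forall>i. 0 < v $ i \<Longrightarrow> v \<noteq> (0::real^'n)"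
  by (metis less_irrefl zero_index)

lemma inner_pos_of_pos:
  fixes u v :: "real^'n"
  shows "\<forall>i. 0 < u $ i \<Longrightarrow> \<forall>i. 0 < v $ i \<Longrightarrow> 0 < inner u v"
  by (intro inner_pos_of_nonneg_nonzero pos_vector_nonzero) (auto intro: less_imp_le)

lemma vector_matrix_mult_nonneg:
  fixes P :: "real^'n^'m"
  shows "nonneg_mat P \<Longrightarrow> \<forall>i. 0 \<le> x $ i \<Longrightarrow> 0 \<le> (x v* P) $ j"
  unfolding vector_matrix_mult_nth nonneg_mat_def by (intro sum_nonneg) auto

lemma nonneg_mat_nonzero_pos_entry:
  fixes X :: "real^'n^'m"
  assumes "nonneg_mat X" "X \<noteq> 0"
  obtains a b where "0 < X $ a $ b"
proof -
  obtain a b where "X $ a $ b \<noteq> 0" using assms(2) by (auto simp: vec_eq_iff)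
  with assms(1) show thesis by (intro that[of a b]) (simp add: nonneg_mat_def order_less_le)
qed

lemma positive_imp_nonneg_mat: "\<forall>i j. 0 < M $ i $ j \<Longrightarrow> nonneg_mat (M::real^'n^'m)"
  by (simp add: nonneg_mat_def less_imp_le)

lemma positive_imp_irreducible_mat: "\<forall>i j. 0 < M $ i $ j \<Longrightarrow> irreducible_mat (M::real^'n^'n)"
  unfolding irreducible_mat_def by (metis UNIV_eq_I equals0I less_irrefl)

lemma nonneg_mat_transpose: "nonneg_mat P \<Longrightarrow> nonneg_mat (transpose P)"
  by (simp add: nonneg_mat_def transpose_def)

lemma irreducible_mat_transpose:
  fixes P :: "real^'n^'n"
  assumes "irreducible_mat P"
  shows "irreducible_mat (transpose P)"
  unfolding irreducible_mat_def
proof (intro allI impI)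
  fix S :: "'n set"
  assume "S \<noteq> {} \<and> S \<noteq> UNIV"
  then have "- S \<noteq> {} \<and> - S \<noteq> UNIV" by auto
  then obtain i j where "i \<notin> S" "j \<in> S" "P $ i $ j \<noteq> 0"
    using assms[unfolded irreducible_mat_def, rule_format, of "- S"] by auto
  then show "\<exists>i\<in>S. \<exists>j. j \<notin> S \<and> transpose P $ i $ j \<noteq> 0"
    by (auto simp: transpose_def)
qed

lemma irreducible_mat_mono:
  fixes P Q :: "real^'n^'n"
  assumes "nonneg_mat P" "irreducible_mat P" "\<forall>i j. P $ i $ j \<le> Q $ i $ j"
  shows "irreducible_mat Q"
  unfolding irreducible_mat_def
proof (intro allI impI)
  fix S :: "'n set"
  assume "S \<noteq> {} \<and> S \<noteq> UNIV"
  then obtain i j where "i \<in> S" "j \<notin> S" "P $ i $ j \<noteq> 0"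
    using assms(2) unfolding irreducible_mat_def by blast
  moreover have "0 \<le> P $ i $ j" "P $ i $ j \<le> Q $ i $ j"
    using assms(1,3) by (auto simp: nonneg_mat_def)
  ultimately have "0 < Q $ i $ j" by linarith
  with \<open>i \<in> S\<close> \<open>j \<notin> S\<close> show "\<exists>i\<in>S. \<exists>j. j \<notin> S \<and> Q $ i $ j \<noteq> 0" by force
qed

lemma irreducible_mat_row_pos:
  fixes P :: "real^'n^'n"
  assumes "CARD('n) \<ge> 2" "nonneg_mat P" "irreducible_mat P"
  obtains j where "0 < P $ i $ j"
proof -
  obtain j where "P $ i $ j \<noteq> 0"
    using assms(3) singleton_ne_UNIV[OF assms(1), of i] unfolding irreducible_mat_def by blast
  with assms(2) show thesis by (intro that[of j]) (simp add: nonneg_mat_def order_less_le)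
qed

lemma positive_mat_vector_mult_pos:
  fixes M :: "real^'n^'n"
  assumes "\<forall>i j. 0 < M $ i $ j" "\<forall>i. 0 \<le> x $ i" "x \<noteq> 0"
  shows "0 < (x v* M) $ j"
proof -
  have "0 < inner x (column j M)"
    using inner_pos_of_nonneg_nonzero[of "column j M" x] assms
    by (simp add: column_def inner_commute)
  then show ?thesis by (simp add: vector_matrix_mult_nth inner_vec_def column_def)
qed

lemma positive_mult_nonneg_mult_pos:
  fixes X Y Z :: "real^'n^'n"
  assumes "\<forall>i j. 0 < X $ i $ j" "nonneg_mat Y" "Y \<noteq> 0" "\<forall>i j. 0 < Z $ i $ j"
  shows "0 < (X ** Y ** Z) $ i $ j"
proof -
  obtain a b where "0 < Y $ a $ b" using nonneg_mat_nonzero_pos_entry[OF assms(2,3)] .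
  have XY_nonneg: "0 \<le> (X ** Y) $ i $ k" for k
    unfolding matrix_matrix_mult_nth using assms(1,2)
    by (intro sum_nonneg mult_nonneg_nonneg) (auto simp: nonneg_mat_def less_imp_le)
  have "0 < X $ i $ a * Y $ a $ b" using assms(1) \<open>0 < Y $ a $ b\<close> by simp
  also have "\<dots> \<le> (X ** Y) $ i $ b"
    unfolding matrix_matrix_mult_nth using assms(1,2)
    by (intro member_le_sum) (auto simp: nonneg_mat_def less_imp_le)
  finally have "0 < (X ** Y) $ i $ b * Z $ b $ j" using assms(4) by simp
  also have "\<dots> \<le> (X ** Y ** Z) $ i $ j"
    unfolding matrix_matrix_mult_nth[of "X ** Y"] using XY_nonneg assms(4)
    by (intro member_le_sum) (auto simp: less_imp_le)
  finally show ?thesis .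
qed

lemma irreducible_mat_left_positive:
  fixes P :: "real^'n^'n"
  assumes "nonneg_mat P" "irreducible_mat P" "\<forall>i. 0 \<le> x $ i" "x \<noteq> 0"
    and zeros: "\<forall>j. x $ j = 0 \<longrightarrow> (x v* P) $ j \<le> 0"
  shows "0 < x $ j"
proof (rule ccontr)
  define Z where "Z = {j. x $ j = 0}"
  assume "\<not> 0 < x $ j"
  then have "x $ j = 0" using assms(3)[rule_format, of j] by linarith
  then have "Z \<noteq> {}" by (auto simp: Z_def)
  moreover have "Z \<noteq> UNIV" using assms(4) by (auto simp: Z_def vec_eq_iff)
  ultimately have "- Z \<noteq> {}" "- Z \<noteq> UNIV" by auto
  then obtain i k where "i \<notin> Z" "k \<in> Z" "P $ i $ k \<noteq> 0"
    using assms(2)[unfolded irreducible_mat_def, rule_format, of "- Z"] by auto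
  then have "0 < x $ i * P $ i $ k"
    using assms(1,3) by (simp add: Z_def nonneg_mat_def order_less_le)
  also have "\<dots> \<le> (x v* P) $ k"
    unfolding vector_matrix_mult_nth using assms(1,3)
    by (intro member_le_sum) (auto simp: nonneg_mat_def)
  finally show False using zeros \<open>k \<in> Z\<close> by (auto simp: Z_def)
qed

section \<open>Perron-Frobenius theory\<close>

definition prob_simplex :: "(real^'n) set" where
  "prob_simplex = {x. (\<forall>i. 0 \<le> x $ i) \<and> sum (($) x) UNIV = 1}"

lemma compact_prob_simplex: "compact prob_simplex"
  unfolding compact_eq_bounded_closed
proof
  have "prob_simplex \<subseteq> cbox 0 1"
  proof
    fix x :: "real^'n"
    assume x: "x \<in> prob_simplex"
    then have "x $ i \<le> 1" for i
      unfolding prob_simplex_def by (metis (mono_tags) member_le_sum finite UNIV_I mem_Collect_eq)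
    with x show "x \<in> cbox 0 1" by (simp add: prob_simplex_def mem_box_cart)
  qed
  then show "bounded prob_simplex" using bounded_cbox bounded_subset by blast
  show "closed prob_simplex" unfolding prob_simplex_def
    by (intro closed_Collect_conj closed_Collect_all closed_Collect_le closed_Collect_eq
        continuous_intros)
qed

lemma convex_prob_simplex: "convex prob_simplex"
  unfolding convex_def prob_simplex_def
  by (simp add: sum.distrib flip: sum_distrib_left)

lemma prob_simplex_nonempty: "(prob_simplex :: (real^'n) set) \<noteq> {}"
proof -
  have "(\<chi> i. 1 / real CARD('n)) \<in> (prob_simplex :: (real^'n) set)"
    by (simp add: prob_simplex_def)
  then show ?thesis by blast
qed

lemma prob_simplex_nonzero: "x \<in> prob_simplex \<Longrightarrow> x \<noteq> 0"
  by (auto simp: prob_simplex_def)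

lemma irreducible_mat_vector_mult_sum_pos:
  fixes P :: "real^'n^'n"
  assumes "CARD('n) \<ge> 2" "nonneg_mat P" "irreducible_mat P" "\<forall>i. 0 \<le> x $ i" "x \<noteq> 0"
  shows "0 < sum (($) (x v* P)) UNIV"
proof -
  obtain i where "x $ i \<noteq> 0" using assms(5) by (auto simp: vec_eq_iff)
  then have "0 < x $ i" using assms(4) by (simp add: order_less_le)
  obtain j where "0 < P $ i $ j" using irreducible_mat_row_pos[OF assms(1-3)] by blast
  have "0 < x $ i * P $ i $ j" using \<open>0 < x $ i\<close> \<open>0 < P $ i $ j\<close> by simp
  also have "\<dots> \<le> (x v* P) $ j"
    unfolding vector_matrix_mult_nth using assms(2,4)
    by (intro member_le_sum) (auto simp: nonneg_mat_def)
  also have "\<dots> \<le> sum (($) (x v* P)) UNIV"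
    using vector_matrix_mult_nonneg[OF assms(2,4)] by (intro member_le_sum) auto
  finally show ?thesis .
qed

lemma perron_left_eigenvector_exists:
  fixes P :: "real^'n^'n"
  assumes "CARD('n) \<ge> 2" "nonneg_mat P" "irreducible_mat P"
  obtains u c where "\<forall>i. 0 < u $ i" "u v* P = c *\<^sub>R u"
proof -
  define g where "g x = sum (($) (x v* P)) UNIV" for x
  define f where "f x = inverse (g x) *\<^sub>R (x v* P)" for x
  have xP_nonneg: "0 \<le> (x v* P) $ j" if "x \<in> prob_simplex" for x j
    using that assms(2) by (intro vector_matrix_mult_nonneg) (auto simp: prob_simplex_def)
  have g_pos: "0 < g x" if "x \<in> prob_simplex" for x
    unfolding g_def using that prob_simplex_nonzero
    by (intro irreducible_mat_vector_mult_sum_pos[OF assms]) (auto simp: prob_simplex_def)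
  have "continuous_on prob_simplex (\<lambda>x. x v* P)"
    using matrix_vector_mult_linear_continuous_on[of _ "transpose P"] by simp
  then have "continuous_on prob_simplex f"
    unfolding f_def g_def
    by (intro continuous_intros) (use g_pos[unfolded g_def] in force)+
  moreover have "f x \<in> prob_simplex" if "x \<in> prob_simplex" for x
  proof -
    have "0 \<le> f x $ j" for j
      using g_pos[OF that] xP_nonneg[OF that] by (simp add: f_def)
    moreover have "sum (($) (f x)) UNIV = 1"
      using g_pos[OF that] by (simp add: f_def g_def flip: sum_distrib_left)
    ultimately show ?thesis by (simp add: prob_simplex_def)
  qed
  then have "f \<in> prob_simplex \<rightarrow> prob_simplex" by blast
  ultimately obtain x where x: "x \<in> prob_simplex" "f x = x"
    using brouwer[OF compact_prob_simplex convex_prob_simplex prob_simplex_nonempty] by blast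
  have xP: "x v* P = g x *\<^sub>R x"
  proof -
    have "x v* P = g x *\<^sub>R (inverse (g x) *\<^sub>R (x v* P))"
      using g_pos[OF x(1)] by simp
    also have "\<dots> = g x *\<^sub>R x"
      by (simp only: x(2)[unfolded f_def])
    finally show ?thesis .
  qed
  have "0 < x $ i" for i
  proof (rule irreducible_mat_left_positive[OF assms(2,3)])
    show "\<forall>i. 0 \<le> x $ i" "x \<noteq> 0" using x(1) prob_simplex_nonzero by (auto simp: prob_simplex_def)
    show "\<forall>j. x $ j = 0 \<longrightarrow> (x v* P) $ j \<le> 0" by (simp add: xP)
  qed
  with xP show thesis by (intro that) auto
qed

lemma spec_rad_eqI:
  fixes X :: "real^'n^'n"
  assumes root: "det (mat z0 - map_matrix complex_of_real X) = 0"
    and bound: "\<And>z. det (mat z - map_matrix complex_of_real X) = 0 \<Longrightarrow> cmod z \<le> cmod z0"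
  shows "spec_rad X = cmod z0"
proof -
  define p :: "complex poly" where
    "p = det (\<chi> i j. (if i = j then [:0, 1:] else 0) - [:complex_of_real (X $ i $ j):])"
  have "poly (if i = j then [:0, 1:] else 0) z = (mat z :: complex^'n^'n) $ i $ j" for i j z
    by (simp add: mat_def)
  then have poly_p: "poly p z = det (mat z - map_matrix complex_of_real X)" for z
    unfolding p_def det_def by (simp add: poly_sum poly_prod)
  have "p \<noteq> 0"
  proof
    assume "p = 0"
    then have "cmod (of_real (cmod z0 + 1)) \<le> cmod z0" using bound poly_p by (metis poly_0)
    then show False by simp
  qed
  have "{cmod z | z. det (mat z - (\<chi> i j. complex_of_real (X $ i $ j))) = 0}
      = cmod ` {z. poly p z = 0}"
    by (auto simp: poly_p map_matrix_def)
  then have "spec_rad X = Max (cmod ` {z. poly p z = 0})"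
    by (simp add: spec_rad_def)
  also have "\<dots> = cmod z0"
    using poly_roots_finite[OF \<open>p \<noteq> 0\<close>] root bound by (intro Max_eqI) (auto simp: poly_p)
  finally show ?thesis .
qed

lemma cmod_eigenvalue_le:
  fixes P :: "real^'n^'n"
  assumes "nonneg_mat P" "\<forall>i. 0 < u $ i" "u v* P = c *\<^sub>R u"
    and "det (mat z - map_matrix complex_of_real P) = 0"
  shows "cmod z \<le> c"
proof -
  obtain x where x: "x \<noteq> 0" "(mat z - map_matrix complex_of_real P) *v x = 0"
    using assms(4) det_eq_0_iff_kernel by blast
  have ev: "z * x $ i = (\<Sum>j\<in>UNIV. complex_of_real (P $ i $ j) * x $ j)" for i
    using arg_cong[OF x(2), of "\<lambda>y. y $ i"]
    by (simp add: matrix_vector_mult_diff_rdistrib mat_vector_mult_nth)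
      (simp add: matrix_vector_mult_nth)
  define a where "a = (\<chi> i. cmod (x $ i))"
  have za: "cmod z * a $ i \<le> (P *v a) $ i" for i
  proof -
    have "cmod z * a $ i = cmod (\<Sum>j\<in>UNIV. complex_of_real (P $ i $ j) * x $ j)"
      by (simp add: a_def flip: ev norm_mult)
    also have "\<dots> \<le> (\<Sum>j\<in>UNIV. cmod (complex_of_real (P $ i $ j) * x $ j))"
      by (rule norm_sum)
    also have "\<dots> = (P *v a) $ i"
      using assms(1) by (simp add: matrix_vector_mult_nth a_def norm_mult nonneg_mat_def)
    finally show ?thesis .
  qed
  have "0 < inner u a"
    using x(1) by (intro inner_pos_of_nonneg_nonzero assms(2)) (auto simp: a_def vec_eq_iff)
  moreover have "cmod z * inner u a \<le> c * inner u a"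
  proof -
    have "cmod z * inner u a = (\<Sum>i\<in>UNIV. u $ i * (cmod z * a $ i))"
      by (simp add: inner_vec_def sum_distrib_left mult_ac)
    also have "\<dots> \<le> inner u (P *v a)"
      unfolding inner_vec_def using assms(2) za
      by (intro sum_mono mult_left_mono) (auto intro: less_imp_le)
    also have "\<dots> = c * inner u a"
      by (simp add: assms(3) flip: dot_lmul_matrix)
    finally show ?thesis .
  qed
  ultimately show ?thesis by simp
qed

lemma det_eigenvalue_eq_0:
  fixes X :: "real^'n^'n"
  assumes "X *v v = c *\<^sub>R v" "v \<noteq> 0"
  shows "det (mat (complex_of_real c) - map_matrix complex_of_real X) = 0"
  unfolding det_eq_0_iff_kernel
proof (intro exI conjI)
  show "(\<chi> i. complex_of_real (v $ i)) \<noteq> 0" using assms(2) by (auto simp: vec_eq_iff)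
  have "(\<Sum>j\<in>UNIV. X $ i $ j * v $ j) = c * v $ i" for i
    using arg_cong[OF assms(1), of "\<lambda>y. y $ i"] by (simp add: matrix_vector_mult_nth)
  then show "(mat (complex_of_real c) - map_matrix complex_of_real X) *v (\<chi> i. complex_of_real (v $ i)) = 0"
    by (simp add: vec_eq_iff matrix_vector_mult_diff_rdistrib mat_vector_mult_nth)
      (simp add: matrix_vector_mult_nth flip: of_real_mult of_real_sum)
qed

lemma left_right_eigenvalues_eq:
  fixes P :: "real^'n^'n"
  assumes "\<forall>i. 0 < u $ i" "\<forall>i. 0 < v $ i" "u v* P = c *\<^sub>R u" "P *v v = d *\<^sub>R v"
  shows "c = d"
proof -
  have "0 < inner u v" using assms(1,2) by (rule inner_pos_of_pos)
  moreover have "c * inner u v = d * inner u v"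
    using dot_lmul_matrix[of u P v] assms(3,4) by simp
  ultimately show ?thesis by simp
qed

theorem perron_frobenius:
  fixes P :: "real^'n^'n"
  assumes "CARD('n) \<ge> 2" "nonneg_mat P" "irreducible_mat P"
  obtains u v where "\<forall>i. 0 < u $ i" "\<forall>i. 0 < v $ i"
    "u v* P = spec_rad P *\<^sub>R u" "P *v v = spec_rad P *\<^sub>R v"
proof -
  obtain u c where u: "\<forall>i. 0 < u $ i" "u v* P = c *\<^sub>R u"
    using perron_left_eigenvector_exists[OF assms] by blast
  obtain v d where v: "\<forall>i. 0 < v $ i" "P *v v = d *\<^sub>R v"
    using perron_left_eigenvector_exists[OF assms(1) nonneg_mat_transpose irreducible_mat_transpose]
      assms(2,3) by (metis vector_transpose_matrix)
  have "d = c" using left_right_eigenvalues_eq[OF u(1) v(1) u(2) v(2)] by simp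
  have "0 \<le> c * u $ i" for i
    using vector_matrix_mult_nonneg[OF assms(2), of u i] u by (simp add: less_imp_le)
  then have "0 \<le> c" using u(1) by (meson zero_le_mult_iff not_le)
  have "spec_rad P = cmod (complex_of_real c)"
  proof (rule spec_rad_eqI)
    show "det (mat (complex_of_real c) - map_matrix complex_of_real P) = 0"
      using v \<open>d = c\<close> pos_vector_nonzero by (intro det_eigenvalue_eq_0) auto
    show "cmod z \<le> cmod (complex_of_real c)"
      if "det (mat z - map_matrix complex_of_real P) = 0" for z
      using cmod_eigenvalue_le[OF assms(2) u that] \<open>0 \<le> c\<close> by simp
  qed
  with \<open>0 \<le> c\<close> have "spec_rad P = c" by simp
  with u v \<open>d = c\<close> show thesis by (intro that) auto
qed

lemma perron_eigenvalue_strict_mono: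
  fixes P P' :: "real^'n^'n"
  assumes "\<forall>i j. P $ i $ j \<le> P' $ i $ j" "P $ a $ b < P' $ a $ b"
    and "\<forall>i. 0 < u $ i" "u v* P' = \<rho> *\<^sub>R u" "\<forall>i. 0 < v $ i" "P *v v = c *\<^sub>R v"
  shows "c < \<rho>"
proof -
  have gap_nonneg: "0 \<le> ((P' - P) *v v) $ i" for i
    unfolding matrix_vector_mult_nth using assms(1,5)
    by (intro sum_nonneg mult_nonneg_nonneg) (auto intro: less_imp_le)
  have "0 < (P' - P) $ a $ b * v $ b" using assms(2,5) by simp
  also have "\<dots> \<le> ((P' - P) *v v) $ a"
    unfolding matrix_vector_mult_nth using assms(1,5)
    by (intro member_le_sum) (auto intro!: mult_nonneg_nonneg simp: less_imp_le)
  finally have "(P' - P) *v v \<noteq> 0" by (metis less_irrefl zero_index)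
  then have "0 < inner u ((P' - P) *v v)"
    using assms(3) gap_nonneg by (intro inner_pos_of_nonneg_nonzero) auto
  also have "inner u ((P' - P) *v v) = (\<rho> - c) * inner u v"
    using dot_lmul_matrix[of u P' v] assms(4,6)
    by (simp add: matrix_vector_mult_diff_rdistrib inner_diff_right left_diff_distrib)
  finally show ?thesis using inner_pos_of_pos[OF assms(3,5)] by (simp add: zero_less_mult_iff)
qed

section \<open>Subinvariant vectors\<close>

lemma superinvariant_nonneg_eq_0:
  fixes Q :: "real^'n^'n"
  assumes "\<forall>i. 0 < v $ i" "\<forall>i. (Q *v v) $ i < v $ i"
    and "\<forall>j. 0 \<le> z $ j" "\<forall>j. z $ j \<le> (z v* Q) $ j"
  shows "z = 0"
proof (rule ccontr)
  assume "z \<noteq> 0"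
  then obtain k where "z $ k \<noteq> 0" by (auto simp: vec_eq_iff)
  then have "0 < z $ k" using assms(3) by (simp add: order_less_le)
  have "inner z v \<le> inner (z v* Q) v"
    unfolding inner_vec_def using assms(1,4) by (intro sum_mono mult_right_mono) (auto intro: less_imp_le)
  also have "\<dots> = inner z (Q *v v)" by (rule dot_lmul_matrix)
  also have "\<dots> < inner z v"
    unfolding inner_vec_def
  proof (rule sum_strict_mono_ex1)
    show "\<forall>x\<in>UNIV. inner (z $ x) ((Q *v v) $ x) \<le> inner (z $ x) (v $ x)"
      using assms(2,3) by (auto intro!: mult_left_mono simp: less_imp_le)
    show "\<exists>x\<in>UNIV. inner (z $ x) ((Q *v v) $ x) < inner (z $ x) (v $ x)"
      using assms(2) \<open>0 < z $ k\<close> by (intro bexI[where x=k]) auto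
  qed simp
  finally show False by simp
qed

lemma subinvariant_nonneg:
  fixes Q :: "real^'n^'n"
  assumes "nonneg_mat Q" "\<forall>i. 0 < v $ i" "\<forall>i. (Q *v v) $ i < v $ i"
    and "\<forall>j. (w v* Q) $ j \<le> w $ j"
  shows "0 \<le> w $ j"
proof -
  define z where "z = (\<chi> j. max (- w $ j) 0)"
  have "z $ j \<le> (z v* Q) $ j" for j
  proof (cases "w $ j < 0")
    case True
    then have "z $ j = - w $ j" by (simp add: z_def)
    also have "\<dots> \<le> (\<Sum>i\<in>UNIV. (- w $ i) * Q $ i $ j)"
      using assms(4) by (simp add: vector_matrix_mult_nth sum_negf)
    also have "\<dots> \<le> (z v* Q) $ j"
      unfolding vector_matrix_mult_nth z_def using assms(1)
      by (intro sum_mono mult_right_mono) (auto simp: nonneg_mat_def)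
    finally show ?thesis .
  next
    case False
    then show ?thesis
      using vector_matrix_mult_nonneg[OF assms(1), of z j] by (simp add: z_def)
  qed
  then have "z = 0"
    using superinvariant_nonneg_eq_0[OF assms(2,3)] by (simp add: z_def)
  then have "max (- w $ j) 0 = 0" by (metis vec_lambda_beta z_def zero_index)
  then show ?thesis by simp
qed

lemma invertible_I_minus:
  fixes Q :: "real^'n^'n"
  assumes "nonneg_mat Q" "\<forall>i. 0 < v $ i" "\<forall>i. (Q *v v) $ i < v $ i"
  shows "invertible (mat 1 - Q)"
proof -
  have "x = 0" if "transpose (mat 1 - Q) *v x = 0" for x
  proof -
    have xQ: "x v* Q = x" using that by (simp add: vector_matrix_mult_diff_rdistrib)
    have "0 \<le> x $ j" for j
      using subinvariant_nonneg[OF assms, of x] xQ by simp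
    moreover have "0 \<le> (- x) $ j" for j
      using subinvariant_nonneg[OF assms, of "- x"] xQ by (simp add: vector_matrix_mult_uminus)
    ultimately show "x = 0" by (simp add: vec_eq_iff order_antisym)
  qed
  then have "\<exists>B. B ** transpose (mat 1 - Q) = mat 1"
    using matrix_left_invertible_ker by blast
  then show ?thesis by (simp add: left_invertible_transpose invertible_right_inverse)
qed

lemma matrix_inv_I_minus_pos:
  fixes Q :: "real^'n^'n"
  assumes "nonneg_mat Q" "irreducible_mat Q" "\<forall>i. 0 < v $ i" "\<forall>i. (Q *v v) $ i < v $ i"
  shows "0 < matrix_inv (mat 1 - Q) $ i $ j"
proof -
  define y where "y = axis i 1 v* matrix_inv (mat 1 - Q)"
  have "y v* (mat 1 - Q) = axis i 1"
    using matrix_inv_left_right(1)[OF invertible_I_minus[OF assms(1,3,4)]]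
    by (simp add: y_def vector_matrix_mul_assoc)
  then have "y - y v* Q = axis i 1"
    by (simp add: vector_matrix_mult_diff_rdistrib)
  then have yQ: "y v* Q = y - axis i 1"
    by (simp add: algebra_simps flip: \<open>y - y v* Q = axis i 1\<close>)
  have y_nonneg: "\<forall>k. 0 \<le> y $ k"
    using subinvariant_nonneg[OF assms(1,3,4)] yQ by (simp add: axis_def)
  have "y \<noteq> 0"
    using \<open>y v* (mat 1 - Q) = axis i 1\<close> by auto
  have "0 < y $ j"
    by (rule irreducible_mat_left_positive[OF assms(1,2) y_nonneg \<open>y \<noteq> 0\<close>])
      (simp add: yQ axis_def)
  then show ?thesis
    by (simp add: y_def vector_matrix_mult_def axis_def flip: of_bool_def)
qed

lemma exists_pos_left_solution:
  fixes Q :: "real^'n^'n"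
  assumes "\<forall>i j. 0 < Q $ i $ j" "\<forall>i. 0 < v $ i" "\<forall>i. (Q *v v) $ i < v $ i"
    and "\<forall>j. 0 \<le> y $ j" "y \<noteq> 0"
  obtains w where "\<forall>j. 0 < w $ j" "w v* Q = w - y"
proof -
  note Q_nonneg = positive_imp_nonneg_mat[OF assms(1)]
  define w where "w = y v* matrix_inv (mat 1 - Q)"
  have "w v* (mat 1 - Q) = y"
    using matrix_inv_left_right(1)[OF invertible_I_minus[OF Q_nonneg assms(2,3)]]
    by (simp add: w_def vector_matrix_mul_assoc)
  then have "w - w v* Q = y"
    by (simp add: vector_matrix_mult_diff_rdistrib)
  then have wQ: "w v* Q = w - y"
    by (simp add: algebra_simps flip: \<open>w - w v* Q = y\<close>)
  have w_nonneg: "\<forall>j. 0 \<le> w $ j"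
    using subinvariant_nonneg[OF Q_nonneg assms(2,3)] wQ assms(4) by simp
  have "w \<noteq> 0" using wQ assms(5) by auto
  have "0 < w $ j" for j
  proof -
    have "0 < (w v* Q) $ j" by (rule positive_mat_vector_mult_pos[OF assms(1) w_nonneg \<open>w \<noteq> 0\<close>])
    moreover have "(w v* Q) $ j = w $ j - y $ j" "0 \<le> y $ j" using wQ assms(4) by simp_all
    ultimately show ?thesis by linarith
  qed
  with wQ show thesis by (intro that) auto
qed


lemma left_invariant_of_subinvariant:
  fixes M :: "real^'n^'n"
  assumes "\<forall>i. 0 < v $ i" "M *v v = v" "\<forall>j. (x v* M) $ j \<le> x $ j"
  shows "x v* M = x"
proof -
  have "inner v (x - x v* M) = 0"
    by (simp add: inner_diff_right inner_commute[of v] dot_lmul_matrix assms(2))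
  moreover have "x - x v* M = 0" if "inner v (x - x v* M) = 0"
    using inner_pos_of_nonneg_nonzero[OF assms(1), of "x - x v* M"] assms(3) that by auto
  ultimately show ?thesis by simp
qed

lemma left_fixed_vector_eq_0:
  fixes M :: "real^'n^'n"
  assumes "\<forall>i j. 0 < M $ i $ j" "\<forall>i. 0 < v $ i" "M *v v = v" "d v* M = d" "d $ i = 0"
  shows "d = 0"
proof (rule ccontr)
  assume "d \<noteq> 0"
  define a where "a = (\<chi> j. \<bar>d $ j\<bar>)"
  have "a $ j \<le> (a v* M) $ j" for j
  proof -
    have "a $ j = \<bar>(d v* M) $ j\<bar>" by (simp add: a_def assms(4))
    also have "\<dots> = \<bar>\<Sum>k\<in>UNIV. d $ k * M $ k $ j\<bar>" by (simp add: vector_matrix_mult_nth)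
    also have "\<dots> \<le> (\<Sum>k\<in>UNIV. \<bar>d $ k * M $ k $ j\<bar>)" by (rule sum_abs)
    also have "\<dots> = (a v* M) $ j"
      using assms(1) by (simp add: vector_matrix_mult_nth a_def abs_mult less_imp_le)
    finally show ?thesis .
  qed
  then have "(- a) v* M = - a"
    by (intro left_invariant_of_subinvariant[OF assms(2,3)]) (simp add: vector_matrix_mult_uminus)
  then have "a v* M = a" by (simp add: vector_matrix_mult_uminus)
  moreover have "0 < (a v* M) $ i"
    using \<open>d \<noteq> 0\<close> by (intro positive_mat_vector_mult_pos[OF assms(1)]) (auto simp: a_def vec_eq_iff)
  ultimately show False using assms(5) by (simp add: a_def)
qed

section \<open>The resolvent of a nonnegative pencil\<close>

locale perron_pencil =
  fixes P K :: "real^'n^'n" and \<rho> :: real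
  assumes card_ge_2: "CARD('n) \<ge> 2"
    and nonneg_P: "nonneg_mat P" and irreducible_P: "irreducible_mat P"
    and nonneg_K: "nonneg_mat K" and K_nonzero: "K \<noteq> 0"
    and spec_rad_at_\<rho>: "spec_rad (P + \<rho> *\<^sub>R K) = 1"
begin

definition resolvent :: "real \<Rightarrow> real^'n^'n" where
  "resolvent r = matrix_inv (mat 1 - P - r *\<^sub>R K)"

lemma pencil_le: "r \<le> s \<Longrightarrow> (P + r *\<^sub>R K) $ i $ j \<le> (P + s *\<^sub>R K) $ i $ j"
  using nonneg_K by (simp add: nonneg_mat_def mult_right_mono)

lemma nonneg_pencil: "0 \<le> r \<Longrightarrow> nonneg_mat (P + r *\<^sub>R K)"
  using nonneg_P nonneg_K by (simp add: nonneg_mat_def)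

lemma irreducible_pencil: "0 \<le> r \<Longrightarrow> irreducible_mat (P + r *\<^sub>R K)"
  using irreducible_mat_mono[OF nonneg_P irreducible_P] pencil_le[of 0 r] by simp

lemma resolvent_pos:
  assumes "0 \<le> r" "r < \<rho>"
  shows "invertible (mat 1 - P - r *\<^sub>R K)" and "0 < resolvent r $ i $ j"
proof -
  let ?Q = "P + r *\<^sub>R K"
  have "0 \<le> \<rho>" using assms by simp
  obtain u where u: "\<forall>i. 0 < u $ i" "u v* (P + \<rho> *\<^sub>R K) = spec_rad (P + \<rho> *\<^sub>R K) *\<^sub>R u"
    by (rule perron_frobenius[OF card_ge_2 nonneg_pencil irreducible_pencil, OF \<open>0 \<le> \<rho>\<close> \<open>0 \<le> \<rho>\<close>])
  obtain v where v: "\<forall>i. 0 < v $ i" "?Q *v v = spec_rad ?Q *\<^sub>R v"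
    by (rule perron_frobenius[OF card_ge_2 nonneg_pencil irreducible_pencil, OF assms(1) assms(1)])
  obtain a b where "0 < K $ a $ b" using nonneg_mat_nonzero_pos_entry[OF nonneg_K K_nonzero] .
  then have "?Q $ a $ b < (P + \<rho> *\<^sub>R K) $ a $ b" using assms(2) by simp
  moreover have "\<forall>i j. ?Q $ i $ j \<le> (P + \<rho> *\<^sub>R K) $ i $ j"
    using pencil_le[of r \<rho>] assms(2) by simp
  ultimately have "spec_rad ?Q < spec_rad (P + \<rho> *\<^sub>R K)"
    by (intro perron_eigenvalue_strict_mono[OF _ _ u v])
  then have "spec_rad ?Q < 1" by (simp add: spec_rad_at_\<rho>)
  then have Qv: "\<forall>i. (?Q *v v) $ i < v $ i" using v by simp
  have I_minus: "mat 1 - P - r *\<^sub>R K = mat 1 - ?Q" by simp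
  show "invertible (mat 1 - P - r *\<^sub>R K)"
    unfolding I_minus by (rule invertible_I_minus[OF nonneg_pencil[OF assms(1)] v(1) Qv])
  show "0 < resolvent r $ i $ j"
    unfolding resolvent_def I_minus
    by (rule matrix_inv_I_minus_pos[OF nonneg_pencil irreducible_pencil v(1) Qv, OF assms(1,1)])
qed

lemma resolvent_strict_mono:
  assumes "0 \<le> r1" "r1 < r2" "r2 < \<rho>"
  shows "resolvent r1 $ i $ j < resolvent r2 $ i $ j"
proof -
  have "invertible (mat 1 - P - r1 *\<^sub>R K)" "invertible (mat 1 - P - r2 *\<^sub>R K)"
    using assms by (auto intro: resolvent_pos(1))
  moreover have "(mat 1 - P - r1 *\<^sub>R K) - (mat 1 - P - r2 *\<^sub>R K) = (r2 - r1) *\<^sub>R K"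
    by (simp add: algebra_simps)
  ultimately have "resolvent r2 - resolvent r1 = resolvent r2 ** ((r2 - r1) *\<^sub>R K) ** resolvent r1"
    unfolding resolvent_def by (metis matrix_inv_diff)
  also have "\<dots> = (r2 - r1) *\<^sub>R (resolvent r2 ** K ** resolvent r1)"
    by (simp add: matrix_scalar_ac scalar_matrix_assoc)
  finally have "resolvent r2 $ i $ j - resolvent r1 $ i $ j
      = (r2 - r1) * (resolvent r2 ** K ** resolvent r1) $ i $ j"
    by (simp add: vec_eq_iff)
  moreover have "0 < (resolvent r2 ** K ** resolvent r1) $ i $ j"
    using assms resolvent_pos(2)
    by (intro positive_mult_nonneg_mult_pos nonneg_K K_nonzero) auto
  then have "0 < (r2 - r1) * (resolvent r2 ** K ** resolvent r1) $ i $ j"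
    using assms(2) by simp
  ultimately show ?thesis by linarith
qed

end

definition normalized_subinvariant :: "'n \<Rightarrow> real^'n^'n \<Rightarrow> (real^'n) set" where
  "normalized_subinvariant i1 M =
     {w. (\<forall>j. 0 < w $ j) \<and> w $ i1 = 1 \<and> (\<forall>j. (w v* M) $ j \<le> w $ j)}"

lemma normalized_subinvariant_antimono:
  fixes M1 M2 :: "real^'n^'n"
  assumes "\<forall>i j. M1 $ i $ j \<le> M2 $ i $ j"
  shows "normalized_subinvariant i1 M2 \<subseteq> normalized_subinvariant i1 M1"
proof
  fix w
  assume w: "w \<in> normalized_subinvariant i1 M2"
  have "(w v* M1) $ j \<le> (w v* M2) $ j" for j
    unfolding vector_matrix_mult_nth using w assms
    by (intro sum_mono mult_left_mono) (auto simp: normalized_subinvariant_def less_imp_le)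
  with w show "w \<in> normalized_subinvariant i1 M1"
    unfolding normalized_subinvariant_def by (auto intro: order_trans)
qed

lemma normalized_subinvariant_strict_psubset:
  fixes M1 M2 :: "real^'n^'n"
  assumes "CARD('n) \<ge> 2" "\<forall>i j. 0 < M1 $ i $ j" "\<forall>i j. M1 $ i $ j < M2 $ i $ j"
    and "\<forall>i. 0 < v $ i" "\<forall>i. (M1 *v v) $ i < v $ i"
  shows "normalized_subinvariant i1 M2 \<subset> normalized_subinvariant i1 M1"
proof -
  have "\<forall>j. 0 \<le> axis i1 (1::real) $ j" by (simp add: axis_def)
  then obtain w where w: "\<forall>j. 0 < w $ j" "w v* M1 = w - axis i1 1"
    using exists_pos_left_solution[OF assms(2,4,5), of "axis i1 1"] by auto
  define w' where "w' = (1 / w $ i1) *\<^sub>R w"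
  have w'M1: "w' v* M1 = w' - (1 / w $ i1) *\<^sub>R axis i1 1"
    by (simp add: w'_def scaleR_vector_matrix_assoc w(2) algebra_simps)
  have w'_pos: "\<forall>j. 0 < w' $ j" using w(1) by (simp add: w'_def)
  have "w $ i1 \<noteq> 0" using w(1) by (metis less_irrefl)
  then have "w' $ i1 = 1" by (simp add: w'_def)
  moreover have "(w' v* M1) $ j \<le> w' $ j" for j
    using w(1)[rule_format, of i1] by (simp add: w'M1 axis_def)
  ultimately have "w' \<in> normalized_subinvariant i1 M1"
    using w'_pos by (simp add: normalized_subinvariant_def)
  moreover obtain j0 where "j0 \<noteq> i1" using singleton_ne_UNIV[OF assms(1)] by blast
  have "(w' v* M1) $ j0 < (w' v* M2) $ j0"
    unfolding vector_matrix_mult_nth using w'_pos assms(3)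
    by (intro sum_strict_mono) (auto intro: mult_strict_left_mono)
  then have "\<not> (w' v* M2) $ j0 \<le> w' $ j0"
    using \<open>j0 \<noteq> i1\<close> by (simp add: w'M1 axis_def)
  then have "w' \<notin> normalized_subinvariant i1 M2"
    by (auto simp: normalized_subinvariant_def)
  ultimately show ?thesis
    using normalized_subinvariant_antimono[of M1 M2 i1] assms(3) by (auto simp: less_imp_le)
qed

lemma normalized_subinvariant_strict_antimono:
  fixes M :: "real \<Rightarrow> real^'n^'n"
  assumes "CARD('n) \<ge> 2"
    and pos: "\<And>r i j. 0 \<le> r \<Longrightarrow> r \<le> s \<Longrightarrow> 0 < M r $ i $ j"
    and mono: "\<And>r1 r2 i j. 0 \<le> r1 \<Longrightarrow> r1 < r2 \<Longrightarrow> r2 \<le> s \<Longrightarrow> M r1 $ i $ j < M r2 $ i $ j"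
    and "spec_rad (M s) = 1" and r: "0 \<le> r1" "r1 < r2" "r2 \<le> s"
  shows "normalized_subinvariant i1 (M r2) \<subset> normalized_subinvariant i1 (M r1)"
proof -
  have M_s_pos: "\<forall>i j. 0 < M s $ i $ j" using pos r by auto
  obtain u v where "\<forall>i. 0 < u $ i" "\<forall>i. 0 < v $ i"
    "u v* M s = spec_rad (M s) *\<^sub>R u" "M s *v v = spec_rad (M s) *\<^sub>R v"
    by (rule perron_frobenius[OF assms(1) positive_imp_nonneg_mat[OF M_s_pos]
          positive_imp_irreducible_mat[OF M_s_pos]])
  then have v: "\<forall>i. 0 < v $ i" "M s *v v = v" using assms(4) by simp_all
  have "(M r1 *v v) $ i < (M s *v v) $ i" for i
    unfolding matrix_vector_mult_nth using r v(1) mono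
    by (intro sum_strict_mono) (auto intro!: mult_strict_right_mono)
  then show ?thesis
    using r v pos mono by (intro normalized_subinvariant_strict_psubset[OF assms(1)]) auto
qed

lemma normalized_subinvariant_perron:
  fixes M :: "real^'n^'n"
  assumes "CARD('n) \<ge> 2" "\<forall>i j. 0 < M $ i $ j" "spec_rad M = 1"
  obtains w where "normalized_subinvariant i1 M = {w}" "\<forall>j. 0 < w $ j" "w $ i1 = 1" "w v* M = w"
proof -
  obtain u v where u: "\<forall>i. 0 < u $ i" and v: "\<forall>i. 0 < v $ i"
    and "u v* M = spec_rad M *\<^sub>R u" "M *v v = spec_rad M *\<^sub>R v"
    by (rule perron_frobenius[OF assms(1) positive_imp_nonneg_mat positive_imp_irreducible_mat,
          OF assms(2) assms(2)])
  then have uM: "u v* M = u" and Mv: "M *v v = v" by (simp_all add: assms(3))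
  define w where "w = (1 / u $ i1) *\<^sub>R u"
  have w: "\<forall>j. 0 < w $ j" "w $ i1 = 1" "w v* M = w"
    using u(1) uM by (simp_all add: w_def scaleR_vector_matrix_assoc less_imp_neq[symmetric])
  have "x = w" if "x \<in> normalized_subinvariant i1 M" for x
  proof -
    have "x v* M = x"
      using that by (intro left_invariant_of_subinvariant[OF v(1) Mv]) (simp add: normalized_subinvariant_def)
    then have "(x - w) v* M = x - w" by (simp add: vector_matrix_mult_diff_distrib w(3))
    then have "x - w = 0"
      using that w(2) by (intro left_fixed_vector_eq_0[OF assms(2) v(1) Mv, of _ i1])
        (auto simp: normalized_subinvariant_def)
    then show ?thesis by simp
  qed
  then have "normalized_subinvariant i1 M = {w}"
    using w by (auto simp: normalized_subinvariant_def)
  with w show thesis by (intro that)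
qed

section \<open>Price-wage feasible domains\<close>

lemma nonneg_tildeA:
  assumes "nonneg_mat A" "nonneg_mat K" "\<forall>j. 0 \<le> \<delta> $ j"
  shows "nonneg_mat (tildeA A K \<delta>)"
  using assms by (simp add: nonneg_mat_def tildeA_def mult_diag_mat_nth)

lemma diag_mult_mult_strict_mono:
  fixes X Y B :: "real^'n^'n"
  assumes "\<forall>i. 0 < l $ i" "nonneg_mat B" "\<forall>j. \<exists>i. B $ i $ j \<noteq> 0"
    and "\<forall>i j. X $ i $ j < Y $ i $ j"
  shows "(diag_mat l ** X ** B) $ i $ j < (diag_mat l ** Y ** B) $ i $ j"
proof -
  obtain k where "B $ k $ j \<noteq> 0" using assms(3) by blast
  then have "0 < B $ k $ j" using assms(2) by (simp add: nonneg_mat_def order_less_le)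
  have "(X ** B) $ i $ j < (Y ** B) $ i $ j"
    unfolding matrix_matrix_mult_nth
  proof (rule sum_strict_mono_ex1)
    show "\<forall>x\<in>UNIV. X $ i $ x * B $ x $ j \<le> Y $ i $ x * B $ x $ j"
      using assms(2,4) by (auto intro!: mult_right_mono simp: nonneg_mat_def less_imp_le)
    show "\<exists>x\<in>UNIV. X $ i $ x * B $ x $ j < Y $ i $ x * B $ x $ j"
      using assms(4) \<open>0 < B $ k $ j\<close> by (intro bexI[where x=k]) auto
  qed simp
  with assms(1) show ?thesis by (simp add: diag_mat_mult_nth flip: matrix_mul_assoc)
qed

lemma Theta_price_eq:
  "Theta_price i1 A K \<delta> l B r = normalized_subinvariant i1 (Mmat A K \<delta> l B r)"
  by (simp add: Theta_price_def normalized_subinvariant_def vector_matrix_mult_I_minus_nth)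

lemma Theta_val_eq:
  "Theta_val i1 A K \<delta> l B = normalized_subinvariant i1 (Mmat A K \<delta> l B 0)"
  by (simp add: Theta_val_def normalized_subinvariant_def vector_matrix_mult_I_minus_nth)

theorem mainTheorem10:
  fixes A K B :: "real^'n^'n" and \<delta> l :: "real^'n" and i1 :: 'n
    and rA rstar :: real
  assumes n2: "CARD('n) \<ge> 2"
    and A_nn: "nonneg_mat A" and K_nn: "nonneg_mat K" and K_nz: "K \<noteq> 0"
    and \<delta>_rng: "\<forall>j. 0 < \<delta> $ j \<and> \<delta> $ j \<le> 1"
    and l_pos: "\<forall>j. l $ j > 0"
    and B_nn: "nonneg_mat B" and B_col: "\<forall>j. \<exists>i. B $ i $ j \<noteq> 0"
    and irr: "irreducible_mat (tildeA A K \<delta>)"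
    and rho_At: "spec_rad (tildeA A K \<delta>) < 1"
    and rA_pos: "rA > 0" and rA_def: "spec_rad (tildeA A K \<delta> + rA *\<^sub>R K) = 1"
    and M0: "spec_rad (Mmat A K \<delta> l B 0) < 1"
    and rstar: "0 < rstar" "rstar < rA" "spec_rad (Mmat A K \<delta> l B rstar) = 1"
  shows "(\<forall>r1 r2. 0 \<le> r1 \<and> r1 < r2 \<and> r2 \<le> rstar \<longrightarrow>
            Theta_price i1 A K \<delta> l B r2 \<subset> Theta_price i1 A K \<delta> l B r1 \<and>
            Theta_price i1 A K \<delta> l B r1 \<subseteq> Theta_val i1 A K \<delta> l B)
       \<and> (\<exists>wstar. Theta_price i1 A K \<delta> l B rstar = {wstar}
            \<and> (\<forall>j. wstar $ j > 0) \<and> wstar $ i1 = 1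
            \<and> wstar v* Mmat A K \<delta> l B rstar
                 = spec_rad (Mmat A K \<delta> l B rstar) *\<^sub>R wstar)
       \<and> \<not> (\<exists>w \<in> Theta_price i1 A K \<delta> l B rstar.
              \<forall>j. (w v* (mat 1 - Mmat A K \<delta> l B rstar)) $ j > 0)"
proof -
  interpret perron_pencil "tildeA A K \<delta>" K rA
    using n2 nonneg_tildeA[OF A_nn K_nn] \<delta>_rng irr K_nn K_nz rA_def
    by unfold_locales (auto simp: less_imp_le)
  let ?M = "Mmat A K \<delta> l B" and ?S = "normalized_subinvariant i1"
  have M_eq: "?M r = diag_mat l ** resolvent r ** B" for r
    by (simp add: Mmat_def resolvent_def)
  have M_pos: "0 < ?M r $ i $ j" if "0 \<le> r" "r \<le> rstar" for r i j
    using diag_mult_mult_strict_mono[OF l_pos B_nn B_col, of 0 "resolvent r"]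
      resolvent_pos(2)[of r] that rstar by (simp add: M_eq)
  have M_mono: "?M r1 $ i $ j < ?M r2 $ i $ j" if "0 \<le> r1" "r1 < r2" "r2 \<le> rstar" for r1 r2 i j
    unfolding M_eq using resolvent_strict_mono[of r1 r2] that rstar
    by (intro diag_mult_mult_strict_mono[OF l_pos B_nn B_col]) auto
  have strict: "?S (?M r2) \<subset> ?S (?M r1)" if "0 \<le> r1" "r1 < r2" "r2 \<le> rstar" for r1 r2
    using n2 M_pos M_mono rstar(3) that by (rule normalized_subinvariant_strict_antimono[where M = ?M])
  have "?S (?M r2) \<subset> ?S (?M r1) \<and> ?S (?M r1) \<subseteq> ?S (?M 0)"
    if "0 \<le> r1" "r1 < r2" "r2 \<le> rstar" for r1 r2
  proof
    show "?S (?M r2) \<subset> ?S (?M r1)" using that by (rule strict)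
    show "?S (?M r1) \<subseteq> ?S (?M 0)"
      using strict[of 0 r1] that by (cases "r1 = 0") (simp_all add: less_imp_le)
  qed
  moreover obtain w where "?S (?M rstar) = {w}" "\<forall>j. 0 < w $ j" "w $ i1 = 1" "w v* ?M rstar = w"
    using M_pos[of rstar] rstar by (auto intro: normalized_subinvariant_perron[OF n2 _ rstar(3)])
  moreover from \<open>w v* ?M rstar = w\<close> have "w v* (mat 1 - ?M rstar) = 0"
    by (simp add: vector_matrix_mult_diff_rdistrib)
  ultimately show ?thesis
    unfolding Theta_price_eq Theta_val_eq using rstar(3) by auto
qed

end
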